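(* Let $\mathcal{X}$ and $\mathcal{Y}$ be finite sets, let $n\ge1$ and $k\ge0$ be integers, and let $P_{\mathbf{y}|\mathbf{x}}$ be a channel from $\mathcal{X}^n$ to $\mathcal{Y}^n$. Let $P_{\mathbf{x}}$ be an arbitrary probability distribution on $\mathcal{X}^n$, let $s>0$ and $\lambda\in\mathbb{R}$. Let $(\mathbf{x},\mathbf{y},\bar{\mathbf{x}})$ be jointly distributed as $P_{\mathbf{x}}(\mathbf{x})P_{\mathbf{y}|\mathbf{x}}(\mathbf{y}|\mathbf{x})P_{\mathbf{x}}(\bar{\mathbf{x}})$. Define the generalized information density $$\imath_s(\mathbf{x},\mathbf{y})=\log_2\frac{P_{\mathbf{y}|\mathbf{x}}(\mathbf{y}|\mathbf{x})^s}{\mathbb{E}_{\bar{\mathbf{x}}}\big[P_{\mathbf{y}|\mathbf{x}}(\mathbf{y}|\bar{\mathbf{x}})^s\big]},$$ for each $\mathbf{y}$ the threshold $\tilde\lambda_{\mathbf{y}}=\big(2^{n\lambda}\,\mathbb{E}_{\bar{\mathbf{x}}}[P_{\mathbf{y}|\mathbf{x}}(\mathbf{y}|\bar{\mathbf{x}})^s]\big)^{1/s}$, and $$\widetilde{\mathrm{RCU}}_\lambda(k,n)=\mathbb{E}\Big[\min\Big\{1,(2^k-1)\Pr\big[P_{\mathbf{y}|\mathbf{x}}(\mathbf{y}|\bar{\mathbf{x}})\ge P_{\mathbf{y}|\mathbf{x}}(\mathbf{y}|\mathbf{x})\,\big|\,\mathbf{x},\mathbf{y}\big]\Big\}\,\mathbb{1}\{\imath_s(\mathbf{x},\mathbf{y})\ge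 n\lambda\}\Big],$$ $$\tilde\psi(\mathbf{y},\mathbf{x})=\Pr\Big[P_{\mathbf{y}|\mathbf{x}}(\mathbf{y}|\bar{\mathbf{x}})\ge\max\{P_{\mathbf{y}|\mathbf{x}}(\mathbf{y}|\mathbf{x}),\tilde\lambda_{\mathbf{y}}\}\,\Big|\,\mathbf{x},\mathbf{y}\Big].$$ Then there exists an $(n,k,\epsilon_{\mathsf T},\epsilon_{\mathsf U})$-code for $P_{\mathbf{y}|\mathbf{x}}$ satisfying simultaneously $$\epsilon_{\mathsf T}\le\widetilde{\mathrm{RCU}}_\lambda(k,n)+\Pr[\imath_s(\mathbf{x},\mathbf{y})<n\lambda]\qquad\text{and}\qquad \epsilon_{\mathsf U}\le\mathbb{E}\big[\min\{1,(2^k-1)\,\tilde\psi(\mathbf{y},\mathbf{x})\}\big].$$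
   Context: A channel from $\mathcal{X}^n$ to $\mathcal{Y}^n$ is a conditional probability mass function $P_{\mathbf{y}|\mathbf{x}}(\mathbf{y}|\mathbf{x})$, $\mathbf{x}\in\mathcal{X}^n$, $\mathbf{y}\in\mathcal{Y}^n$. (The paper notes the same statement applies to continuous alphabets with conditional densities in place of pmfs.) $\mathbb{1}\{\cdot\}$ is the indicator function; $\mathbb{E}_{\bar{\mathbf{x}}}$ denotes expectation over $\bar{\mathbf{x}}\sim P_{\mathbf{x}}$ with $\mathbf{y}$ fixed. Definition ($(n,k,\epsilon_{\mathsf T},\epsilon_{\mathsf U})$-code). An $(n,k,\epsilon_{\mathsf T},\epsilon_{\mathsf U})$-code for the channel $P_{\mathbf{y}|\mathbf{x}}$ consists of: (i) a discrete random variable $u$ with distribution $P_u$ on a set $\mathcal{U}$ with $|\mathcal{U}|\le 2$, known to both transmitter and receiver (common randomness); (ii) an encoder $\phi:\mathcal{U}\times\{1,\dots,2^k\}\to\mathcal{X}^n$; (iii) an erasure decoder $g:\mathcal{U}\times\mathcal{Y}^n\to\{0,1,\dots,2^k\}$, where output $0$ denotes an erasure. For each $u$ and $\hat w\in\{0,1,\dots,2^k\}$ let $\mathcal{D}_{u,\hat w}=\{\mathbf{y}: g(u,\mathbf{y})=\hat w\}$ (these partition $\mathcal{Y}^n$). The message $w$ is uniform on $\{1,\dots,2^k\}$ and independent of $u$, and given $u$ and $w=m$ the output $\mathbf{y}$ has law $P_{\mathbf{y}|\mathbf{x}}(\cdot\,|\,\phi(u,m))$. It is required that the total error probability and undetected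 error probability satisfy $$\frac{1}{2^k}\sum_{m=1}^{2^k}\sum_{\substack{m'=0\\ m'\ne m}}^{2^k}\Pr[\mathbf{y}\in\mathcal{D}_{u,m'}\mid w=m]\le\epsilon_{\mathsf T},\qquad \frac{1}{2^k}\sum_{m=1}^{2^k}\sum_{\substack{m'=1\\ m'\ne m}}^{2^k}\Pr[\mathbf{y}\in\mathcal{D}_{u,m'}\mid w=m]\le\epsilon_{\mathsf U},$$ where probabilities are over the pair $(u,\mathbf{y})$. *)

theory Defs
  imports Complex_Main
begin

definition seqs :: "nat \<Rightarrow> 'a list set" where
  "seqs n = {xs. length xs = n}"

definition is_channel :: "nat \<Rightarrow> ('a list \<Rightarrow> 'b list \<Rightarrow> real) \<Rightarrow> bool" where
  "is_channel n W \<longleftrightarrow>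
     (\<forall>x\<in>seqs n. \<forall>y\<in>seqs n. 0 \<le> W x y) \<and>
     (\<forall>x\<in>seqs n. (\<Sum>y\<in>seqs n. W x y) = 1)"

definition is_input_dist :: "nat \<Rightarrow> ('a list \<Rightarrow> real) \<Rightarrow> bool" where
  "is_input_dist n P \<longleftrightarrow> (\<forall>x\<in>seqs n. 0 \<le> P x) \<and> (\<Sum>x\<in>seqs n. P x) = 1"

text \<open>(n,k,eT,eU)-code with common randomness u on U = bool (so |U| \<le> 2),
  distribution Pu, encoder enc, erasure decoder dec (output 0 = erasure).\<close>
definition is_code ::
  "nat \<Rightarrow> nat \<Rightarrow> real \<Rightarrow> real \<Rightarrow> ('a list \<Rightarrow> 'b list \<Rightarrow> real) \<Rightarrow>
   (bool \<Rightarrow> real) \<Rightarrow> (bool \<Rightarrow> nat \<Rightarrow> 'a list) \<Rightarrow> (bool \<Rightarrow> 'b list \<Rightarrow> nat) \<Rightarrow> bool" where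
  "is_code n k eT eU W Pu enc dec \<longleftrightarrow>
     (\<forall>u. 0 \<le> Pu u) \<and> (\<Sum>u\<in>UNIV. Pu u) = 1 \<and>
     (\<forall>u. \<forall>m\<in>{1..2^k}. enc u m \<in> seqs n) \<and>
     (\<forall>u. \<forall>y\<in>seqs n. dec u y \<in> {0..2^k}) \<and>
     (1 / 2^k) * (\<Sum>m\<in>{1..2^k}. \<Sum>m'\<in>{0..2^k} - {m}.
        \<Sum>u\<in>UNIV. Pu u * (\<Sum>y\<in>{y\<in>seqs n. dec u y = m'}. W (enc u m) y)) \<le> eT \<and>
     (1 / 2^k) * (\<Sum>m\<in>{1..2^k}. \<Sum>m'\<in>{1..2^k} - {m}.
        \<Sum>u\<in>UNIV. Pu u * (\<Sum>y\<in>{y\<in>seqs n. dec u y = m'}. W (enc u m) y)) \<le> eU"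

definition avg_pow :: "nat \<Rightarrow> ('a list \<Rightarrow> real) \<Rightarrow> ('a list \<Rightarrow> 'b list \<Rightarrow> real) \<Rightarrow> real \<Rightarrow> 'b list \<Rightarrow> real" where
  "avg_pow n P W s y = (\<Sum>xb\<in>seqs n. P xb * W xb y powr s)"

definition info_dens :: "nat \<Rightarrow> ('a list \<Rightarrow> real) \<Rightarrow> ('a list \<Rightarrow> 'b list \<Rightarrow> real) \<Rightarrow> real \<Rightarrow> 'a list \<Rightarrow> 'b list \<Rightarrow> real" where
  "info_dens n P W s x y = log 2 (W x y powr s / avg_pow n P W s y)"

definition lam_tilde :: "nat \<Rightarrow> ('a list \<Rightarrow> real) \<Rightarrow> ('a list \<Rightarrow> 'b list \<Rightarrow> real) \<Rightarrow> real \<Rightarrow> real \<Rightarrow> 'b list \<Rightarrow> real" where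
  "lam_tilde n P W s lam y = (2 powr (real n * lam) * avg_pow n P W s y) powr (1 / s)"

definition RCU_tilde :: "nat \<Rightarrow> nat \<Rightarrow> ('a list \<Rightarrow> real) \<Rightarrow> ('a list \<Rightarrow> 'b list \<Rightarrow> real) \<Rightarrow> real \<Rightarrow> real \<Rightarrow> real" where
  "RCU_tilde n k P W s lam =
     (\<Sum>x\<in>seqs n. \<Sum>y\<in>seqs n. P x * W x y *
        (min 1 ((2^k - 1) * (\<Sum>xb\<in>seqs n. P xb * (if W xb y \<ge> W x y then 1 else 0)))
         * (if info_dens n P W s x y \<ge> real n * lam then 1 else 0)))"

definition psi_tilde :: "nat \<Rightarrow> ('a list \<Rightarrow> real) \<Rightarrow> ('a list \<Rightarrow> 'b list \<Rightarrow> real) \<Rightarrow> real \<Rightarrow> real \<Rightarrow> 'b list \<Rightarrow> 'a list \<Rightarrow> real" where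
  "psi_tilde n P W s lam y x =
     (\<Sum>xb\<in>seqs n. P xb *
        (if W xb y \<ge> max (W x y) (lam_tilde n P W s lam y) then 1 else 0))"

end

theory Submission
  imports Defs "HOL-Library.FuncSet"
begin

text \<open>
  Draw the \<open>2^k\<close> codewords i.i.d. from \<open>P\<close> and decode to the maximum-likelihood message, but
  erase unless that message passes the threshold test \<open>i_s \<ge> n\<lambda>\<close>. A total error needs a failed
  test or a competing codeword at least as likely as the sent one; an undetected error needs a
  competing codeword that is at least as likely and, having passed the test, has likelihood at
  least \<open>lam_tilde y\<close>.
  The union bound over the \<open>2^k - 1\<close> competitors bounds both error probabilities averaged over the
  codebook. No single codebook need meet both bounds, but the averaged pair of error probabilities
  is a convex combination of those of individual codebooks, and time sharing between just two of
  them, selected by the common randomness, meets both.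
\<close>

section \<open>Time sharing between two points\<close>

lemma exists_support_nonpos:
  fixes q f :: "'c \<Rightarrow> real"
  assumes S: "finite S" and q: "\<And>c. c \<in> S \<Longrightarrow> 0 \<le> q c" "sum q S = 1"
    and mean: "(\<Sum>c\<in>S. q c * f c) \<le> 0"
  shows "\<exists>c\<in>S. 0 < q c \<and> f c \<le> 0"
proof (rule ccontr)
  assume none: "\<not> ?thesis"
  obtain c0 where "c0 \<in> S" "0 < q c0"
    using q by (metis less_eq_real_def sum.neutral zero_neq_one)
  moreover have "0 \<le> q c * f c" if "c \<in> S" for c
    using none q(1)[OF that] that by (cases "q c = 0") auto
  ultimately have "0 < (\<Sum>c\<in>S. q c * f c)"
    using none S by (intro sum_pos2) auto
  with mean show False by simp
qed

lemma mix_two_points_nonpos: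
  fixes a1 a2 b1 b2 :: real
  assumes "a1 \<le> 0" "0 < a2" "a2 * b1 \<le> a1 * b2"
  shows "\<exists>\<theta>. 0 \<le> \<theta> \<and> \<theta> \<le> 1 \<and>
           \<theta> * a1 + (1 - \<theta>) * a2 \<le> 0 \<and> \<theta> * b1 + (1 - \<theta>) * b2 \<le> 0"
proof -
  define \<theta> where "\<theta> = a2 / (a2 - a1)"
  have den: "0 < a2 - a1" "a2 - a1 \<noteq> 0" using assms by simp_all
  have scaled: "(a2 - a1) * (\<theta> * u + (1 - \<theta>) * v) = a2 * u - a1 * v" for u v
  proof -
    have "(a2 - a1) * (\<theta> * u + (1 - \<theta>) * v) = \<theta> * (a2 - a1) * u + (a2 - a1) * v - \<theta> * (a2 - a1) * v"
      by (simp add: algebra_simps)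
    also have "\<theta> * (a2 - a1) = a2" using den by (simp add: \<theta>_def)
    finally show ?thesis by (simp add: algebra_simps)
  qed
  have "\<theta> * a1 + (1 - \<theta>) * a2 = 0"
    using scaled[of a1 a2] den by simp
  moreover have "\<theta> * b1 + (1 - \<theta>) * b2 \<le> 0"
    using scaled[of b1 b2] assms(3) den(1) by (smt (verit) mult_pos_pos)
  moreover have "0 \<le> \<theta>" "\<theta> \<le> 1"
    using assms(1,2) den by (simp_all add: \<theta>_def field_simps)
  ultimately show ?thesis by auto
qed

text \<open>
  If no single point meets both bounds, let \<open>cs\<close> maximise \<open>-f/g\<close> among the points with
  \<open>f \<le> 0\<close>, giving the direction \<open>f + \<alpha> g\<close>. Either some point with \<open>f > 0\<close> has
  \<open>f + \<alpha> g \<le> 0\<close> and can be mixed with \<open>cs\<close>, or \<open>f + \<alpha> g\<close> has positive mean.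
\<close>

lemma two_point_mixture_nonpos:
  fixes q f g :: "'c \<Rightarrow> real"
  assumes S: "finite S" and q: "\<And>c. c \<in> S \<Longrightarrow> 0 \<le> q c" "sum q S = 1"
    and f: "(\<Sum>c\<in>S. q c * f c) \<le> 0" and g: "(\<Sum>c\<in>S. q c * g c) \<le> 0"
  shows "\<exists>c1\<in>S. \<exists>c2\<in>S. \<exists>\<theta>. 0 \<le> \<theta> \<and> \<theta> \<le> 1 \<and>
           \<theta> * f c1 + (1 - \<theta>) * f c2 \<le> 0 \<and> \<theta> * g c1 + (1 - \<theta>) * g c2 \<le> 0"
proof (cases "\<exists>c\<in>S. f c \<le> 0 \<and> g c \<le> 0")
  case True
  then obtain c where "c \<in> S" "f c \<le> 0" "g c \<le> 0" by blast
  then show ?thesis by (intro bexI[of _ c] exI[of _ 1]) auto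
next
  case no_single: False
  define L where "L = {c\<in>S. 0 < q c \<and> f c \<le> 0}"
  have "L \<noteq> {}" "finite L"
    using exists_support_nonpos[OF S q f] S by (auto simp: L_def)
  then obtain cs where cs: "cs \<in> L" and cs_max: "\<And>c. c \<in> L \<Longrightarrow> - f c / g c \<le> - f cs / g cs"
    using Max_in[of "(\<lambda>c. - f c / g c) ` L"] Max_ge[of "(\<lambda>c. - f c / g c) ` L"] by fastforce
  have L_g: "0 < g c" if "c \<in> L" for c
    using that no_single by (auto simp: L_def)
  define \<alpha> where "\<alpha> = - f cs / g cs"
  have "0 \<le> \<alpha>" and f_cs: "f cs = - \<alpha> * g cs"
    using cs L_g[OF cs] by (auto simp: \<alpha>_def L_def divide_nonpos_pos)
  show ?thesis
  proof (cases "\<exists>c\<in>S. 0 < f c \<and> f c + \<alpha> * g c \<le> 0")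
    case True
    then obtain c where c: "c \<in> S" "0 < f c" "f c + \<alpha> * g c \<le> 0" by blast
    have "f c * g cs \<le> f cs * g c"
      using c(3) L_g[OF cs] f_cs mult_right_mono[OF c(3), of "g cs"] by (simp add: algebra_simps)
    then show ?thesis
      using mix_two_points_nonpos[of "f cs" "f c" "g cs" "g c"] cs c by (auto simp: L_def)
  next
    case False
    have "0 \<le> f c + \<alpha> * g c" if "c \<in> S" "0 < q c" for c
    proof (cases "f c \<le> 0")
      case True
      then have "c \<in> L" using that by (simp add: L_def)
      then show ?thesis using cs_max[of c] L_g[of c] by (simp add: \<alpha>_def field_simps)
    next
      case False
      then show ?thesis using \<open>\<not> (\<exists>c\<in>S. 0 < f c \<and> f c + \<alpha> * g c \<le> 0)\<close> that by auto
    qed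
    then have "0 \<le> q c * (f c + \<alpha> * g c)" if "c \<in> S" for c
      using q(1)[OF that] that by (cases "q c = 0") auto
    moreover obtain c0 where c0: "c0 \<in> S" "0 < q c0" "g c0 \<le> 0"
      using exists_support_nonpos[OF S q g] by blast
    moreover have "0 < f c0 + \<alpha> * g c0"
      using c0 no_single False by force
    ultimately have "0 < (\<Sum>c\<in>S. q c * (f c + \<alpha> * g c))"
      using S by (intro sum_pos2[of S c0]) auto
    also have "\<dots> = (\<Sum>c\<in>S. q c * f c) + \<alpha> * (\<Sum>c\<in>S. q c * g c)"
      by (simp add: algebra_simps sum.distrib sum_distrib_left)
    finally show ?thesis
      using f g \<open>0 \<le> \<alpha>\<close> by (smt (verit) mult_nonneg_nonpos)
  qed
qed

lemma two_point_mixture_le: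
  fixes q f g :: "'c \<Rightarrow> real"
  assumes S: "finite S" and q: "\<And>c. c \<in> S \<Longrightarrow> 0 \<le> q c" "sum q S = 1"
    and f: "(\<Sum>c\<in>S. q c * f c) \<le> A" and g: "(\<Sum>c\<in>S. q c * g c) \<le> B"
  shows "\<exists>c1\<in>S. \<exists>c2\<in>S. \<exists>\<theta>. 0 \<le> \<theta> \<and> \<theta> \<le> 1 \<and>
           \<theta> * f c1 + (1 - \<theta>) * f c2 \<le> A \<and> \<theta> * g c1 + (1 - \<theta>) * g c2 \<le> B"
proof -
  have shift: "(\<Sum>c\<in>S. q c * (h c - C)) = (\<Sum>c\<in>S. q c * h c) - C" for h :: "'c \<Rightarrow> real" and C
    using q(2) by (simp add: right_diff_distrib sum_subtractf flip: sum_distrib_right)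
  obtain c1 c2 \<theta> where "c1 \<in> S" "c2 \<in> S" "0 \<le> \<theta>" "\<theta> \<le> 1"
      "\<theta> * (f c1 - A) + (1 - \<theta>) * (f c2 - A) \<le> 0" "\<theta> * (g c1 - B) + (1 - \<theta>) * (g c2 - B) \<le> 0"
    using two_point_mixture_nonpos[OF S q, of "\<lambda>c. f c - A" "\<lambda>c. g c - B"] f g by (auto simp: shift)
  then show ?thesis by (intro bexI[of _ c1] bexI[of _ c2] exI[of _ \<theta>]) (auto simp: algebra_simps)
qed

section \<open>I.i.d. random codebooks\<close>

definition iid_weight :: "('x \<Rightarrow> real) \<Rightarrow> 'i set \<Rightarrow> ('i \<Rightarrow> 'x) \<Rightarrow> real" where
  "iid_weight P I c = (\<Prod>i\<in>I. P (c i))"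

lemma iid_weight_nonneg:
  assumes "\<And>x. x \<in> A \<Longrightarrow> 0 \<le> P x" and "c \<in> PiE I (\<lambda>_. A)"
  shows "0 \<le> iid_weight P I c"
  unfolding iid_weight_def using assms by (intro prod_nonneg) (auto simp: PiE_def Pi_def)

lemma sum_iid_weight:
  assumes "finite A" "finite I" "sum P A = 1"
  shows "(\<Sum>c\<in>PiE I (\<lambda>_. A). iid_weight P I c) = 1"
  using prod_sum_PiE[of I "\<lambda>_. A" "\<lambda>_. P", symmetric] assms by (simp add: iid_weight_def)

lemma sum_iid_weight_split:
  assumes A: "finite A" and I: "finite I" and m: "m \<in> I"
  shows "(\<Sum>c\<in>PiE I (\<lambda>_. A). iid_weight P I c * F c)
       = (\<Sum>x\<in>A. P x * (\<Sum>c\<in>PiE (I - {m}) (\<lambda>_. A). iid_weight P (I - {m}) c * F (c(m := x))))"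
proof -
  define J where "J = I - {m}"
  have IJ: "I = insert m J" "m \<notin> J" "finite J" using m I by (auto simp: J_def)
  have weight: "iid_weight P I (c(m := x)) = P x * iid_weight P J c" for c x
  proof -
    have "(\<Prod>i\<in>J. P ((c(m := x)) i)) = (\<Prod>i\<in>J. P (c i))"
      using IJ by (intro prod.cong) auto
    then show ?thesis using IJ by (simp add: iid_weight_def)
  qed
  have "(\<Sum>c\<in>PiE I (\<lambda>_. A). iid_weight P I c * F c)
      = (\<Sum>(x, c)\<in>A \<times> PiE J (\<lambda>_. A). iid_weight P I (c(m := x)) * F (c(m := x)))"
    unfolding IJ(1) PiE_insert_eq using inj_combinator[OF IJ(2), of "\<lambda>_. A"]
    by (subst sum.reindex) (auto simp: split_def)
  also have "\<dots> = (\<Sum>x\<in>A. P x * (\<Sum>c\<in>PiE J (\<lambda>_. A). iid_weight P J c * F (c(m := x))))"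
    by (simp add: sum.cartesian_product[symmetric] weight sum_distrib_left mult_ac)
  finally show ?thesis unfolding J_def .
qed

lemma sum_iid_weight_marginal:
  assumes A: "finite A" and I: "finite I" and P: "sum P A = 1" and j: "j \<in> I"
  shows "(\<Sum>c\<in>PiE I (\<lambda>_. A). iid_weight P I c * g (c j)) = (\<Sum>x\<in>A. P x * g x)"
proof -
  have "(\<Sum>c\<in>PiE I (\<lambda>_. A). iid_weight P I c * g (c j))
      = (\<Sum>x\<in>A. P x * g x * (\<Sum>c\<in>PiE (I - {j}) (\<lambda>_. A). iid_weight P (I - {j}) c))"
    by (subst sum_iid_weight_split[OF A I j]) (simp add: sum_distrib_left mult_ac)
  then show ?thesis
    using sum_iid_weight[OF A _ P, of "I - {j}"] I by simp
qed

lemma iid_union_bound: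
  assumes A: "finite A" and J: "finite J" and P: "sum P A = 1" "\<And>x. x \<in> A \<Longrightarrow> 0 \<le> P x"
  shows "(\<Sum>c\<in>PiE J (\<lambda>_. A). iid_weight P J c * min 1 (\<Sum>j\<in>J. Z (c j)))
       \<le> min 1 (real (card J) * (\<Sum>x\<in>A. P x * Z x))"
proof -
  let ?C = "PiE J (\<lambda>_. A)" and ?w = "iid_weight P J"
  have w: "0 \<le> ?w c" if "c \<in> ?C" for c
    using iid_weight_nonneg[OF P(2) that] .
  have "(\<Sum>c\<in>?C. ?w c * min 1 (\<Sum>j\<in>J. Z (c j))) \<le> (\<Sum>c\<in>?C. ?w c)"
    using w by (intro sum_mono) (simp add: mult_left_le)
  moreover have "(\<Sum>c\<in>?C. ?w c * min 1 (\<Sum>j\<in>J. Z (c j))) \<le> (\<Sum>c\<in>?C. ?w c * (\<Sum>j\<in>J. Z (c j)))"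
    using w by (intro sum_mono mult_left_mono) auto
  moreover have "(\<Sum>c\<in>?C. ?w c * (\<Sum>j\<in>J. Z (c j))) = (\<Sum>j\<in>J. \<Sum>x\<in>A. P x * Z x)"
    unfolding sum_distrib_left by (subst sum.swap) (simp add: sum_iid_weight_marginal[OF A J P(1)])
  ultimately show ?thesis
    using sum_iid_weight[OF A J P(1)] by simp
qed

lemma iid_random_coding_bound:
  assumes A: "finite A" and P: "sum P A = 1" "\<And>x. x \<in> A \<Longrightarrow> 0 \<le> P x"
    and I: "finite I" and m: "m \<in> I" and b: "\<And>x. x \<in> A \<Longrightarrow> 0 \<le> b x"
    and h: "\<And>x c. x \<in> A \<Longrightarrow> c \<in> PiE (I - {m}) (\<lambda>_. A) \<Longrightarrow>
              h (c(m := x)) \<le> a x + b x * min 1 (\<Sum>j\<in>I - {m}. Z x (c j))"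
  shows "(\<Sum>c\<in>PiE I (\<lambda>_. A). iid_weight P I c * h c)
       \<le> (\<Sum>x\<in>A. P x * (a x + b x * min 1 (real (card I - 1) * (\<Sum>x'\<in>A. P x' * Z x x'))))"
  unfolding sum_iid_weight_split[OF A I m]
proof (intro sum_mono mult_left_mono)
  fix x assume x: "x \<in> A"
  let ?J = "I - {m}" and ?C = "PiE (I - {m}) (\<lambda>_. A)"
  have J: "finite ?J" "card ?J = card I - 1" using I m by auto
  have "(\<Sum>c\<in>?C. iid_weight P ?J c * h (c(m := x)))
      \<le> (\<Sum>c\<in>?C. iid_weight P ?J c * (a x + b x * min 1 (\<Sum>j\<in>?J. Z x (c j))))"
    by (intro sum_mono mult_left_mono h[OF x] iid_weight_nonneg[OF P(2)])
  also have "\<dots> = a x * (\<Sum>c\<in>?C. iid_weight P ?J c) + b x * (\<Sum>c\<in>?C. iid_weight P ?J c * min 1 (\<Sum>j\<in>?J. Z x (c j)))"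
    by (simp add: distrib_left sum.distrib sum_distrib_left mult_ac)
  also have "\<dots> = a x + b x * (\<Sum>c\<in>?C. iid_weight P ?J c * min 1 (\<Sum>j\<in>?J. Z x (c j)))"
    using sum_iid_weight[OF A J(1) P(1)] by simp
  also have "\<dots> \<le> a x + b x * min 1 (real (card I - 1) * (\<Sum>x'\<in>A. P x' * Z x x'))"
    using iid_union_bound[OF A J(1) P, of "Z x"] b[OF x] J(2) by (simp add: mult_left_mono)
  finally show "(\<Sum>c\<in>?C. iid_weight P ?J c * h (c(m := x)))
      \<le> a x + b x * min 1 (real (card I - 1) * (\<Sum>x'\<in>A. P x' * Z x x'))" .
  show "0 \<le> P x" using P(2) x .
qed

section \<open>Threshold maximum-likelihood decoding\<close>

lemma arg_max_on_if_finite: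
  fixes f :: "'a \<Rightarrow> 'b::linorder"
  assumes "finite S" "S \<noteq> {}"
  shows "arg_max_on f S \<in> S" "\<And>y. y \<in> S \<Longrightarrow> f y \<le> f (arg_max_on f S)"
proof -
  have "Max (f ` S) \<in> f ` S"
    using assms by simp
  then obtain x where "x \<in> S" "f x = Max (f ` S)"
    by (metis imageE)
  then have x: "x \<in> S" "\<And>y. y \<in> S \<Longrightarrow> f y \<le> f x"
    using assms(1) by auto
  have "arg_max_on f S \<in> S \<and> (\<forall>y\<in>S. f y \<le> f (arg_max_on f S))"
    unfolding arg_max_on_def
    by (rule arg_maxI[where P="\<lambda>x. x \<in> S" and Q="\<lambda>z. z \<in> S \<and> (\<forall>y\<in>S. f y \<le> f z)"])
      (use x in \<open>auto simp: not_less\<close>)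
  then show "arg_max_on f S \<in> S" "\<And>y. y \<in> S \<Longrightarrow> f y \<le> f (arg_max_on f S)"
    by auto
qed

definition threshold_ml_decoder :: "nat \<Rightarrow> (nat \<Rightarrow> 'b::linorder) \<Rightarrow> (nat \<Rightarrow> bool) \<Rightarrow> nat" where
  "threshold_ml_decoder M w D = (let m = arg_max_on w {1..M} in if D m then m else 0)"

lemma threshold_ml_decoder_range:
  assumes "1 \<le> M"
  shows "threshold_ml_decoder M w D \<in> {0..M}"
  using arg_max_on_if_finite(1)[where f=w and S="{1..M}"] assms
  by (auto simp: threshold_ml_decoder_def Let_def)

lemma threshold_ml_decoder_nonzero:
  assumes "1 \<le> M" "threshold_ml_decoder M w D \<noteq> 0"
  shows "D (threshold_ml_decoder M w D)" "\<And>j. j \<in> {1..M} \<Longrightarrow> w j \<le> w (threshold_ml_decoder M w D)"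
  using assms arg_max_on_if_finite[where f=w and S="{1..M}"]
  by (auto simp: threshold_ml_decoder_def Let_def split: if_splits)

lemma threshold_ml_decoder_eq:
  assumes M: "1 \<le> M" and m: "m \<in> {1..M}" "D m" and unique: "\<And>j. j \<in> {1..M} - {m} \<Longrightarrow> w j < w m"
  shows "threshold_ml_decoder M w D = m"
proof -
  have "arg_max_on w {1..M} \<in> {1..M}" "w m \<le> w (arg_max_on w {1..M})"
    using arg_max_on_if_finite[where f=w and S="{1..M}"] M m(1) by auto
  then have "arg_max_on w {1..M} = m"
    using unique by (meson DiffI leD singletonD)
  then show ?thesis using m(2) by (simp add: threshold_ml_decoder_def)
qed

lemma min_one_count_eq_one:
  assumes "finite J" "j \<in> J" "Q j"
  shows "min 1 (\<Sum>i\<in>J. if Q i then 1 else 0) = (1::real)"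
proof -
  have "(1::real) \<le> (\<Sum>i\<in>J. if Q i then 1 else 0)"
    using member_le_sum[of j J "\<lambda>i. if Q i then 1 else (0::real)"] assms by simp
  then show ?thesis by simp
qed

lemma threshold_ml_decoder_error_le:
  fixes w :: "nat \<Rightarrow> real"
  assumes M: "1 \<le> M" and m: "m \<in> {1..M}" and w: "0 \<le> w m" and D: "D m \<longleftrightarrow> T \<and> 0 < w m"
  shows "w m * (if threshold_ml_decoder M w D \<noteq> m then 1 else 0)
       \<le> w m * ((if \<not> T then 1 else 0) + (if T then 1 else 0) * min 1 (\<Sum>j\<in>{1..M} - {m}. if w m \<le> w j then 1 else 0))"
proof (cases "T \<and> 0 < w m \<and> (\<forall>j\<in>{1..M} - {m}. w j < w m)")
  case True
  then have "threshold_ml_decoder M w D = m"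
    using D by (intro threshold_ml_decoder_eq[OF M m]) auto
  then show ?thesis using True w by (simp add: sum_nonneg)
next
  case False
  then consider "\<not> T" | "w m = 0" | j where "T" "j \<in> {1..M} - {m}" "w m \<le> w j"
    using w by (force simp: not_less)
  then show ?thesis
    using w min_one_count_eq_one[of "{1..M} - {m}" _ "\<lambda>j. w m \<le> w j"] by cases auto
qed

lemma threshold_ml_decoder_undetected_le:
  fixes w :: "nat \<Rightarrow> real"
  assumes M: "1 \<le> M" and m: "m \<in> {1..M}" and D: "\<And>j. D j \<Longrightarrow> t \<le> w j"
  shows "(if threshold_ml_decoder M w D \<in> {1..M} - {m} then 1 else 0)
       \<le> min 1 (\<Sum>j\<in>{1..M} - {m}. if max (w m) t \<le> w j then 1 else (0::real))"
proof (cases "threshold_ml_decoder M w D \<in> {1..M} - {m}")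
  case True
  then have "D (threshold_ml_decoder M w D)" "w m \<le> w (threshold_ml_decoder M w D)"
    using threshold_ml_decoder_nonzero[OF M, of w D] m by auto
  then have "max (w m) t \<le> w (threshold_ml_decoder M w D)"
    using D by simp
  then show ?thesis
    using True min_one_count_eq_one[of "{1..M} - {m}" _ "\<lambda>j. max (w m) t \<le> w j"] by simp
next
  case False
  have "0 \<le> min 1 (\<Sum>j\<in>{1..M} - {m}. if max (w m) t \<le> w j then 1 else (0::real))"
    by (simp add: sum_nonneg)
  then show ?thesis by (simp only: if_not_P[OF False])
qed

section \<open>Random coding bounds for the threshold decoder\<close>

lemma finite_seqs: "finite (seqs n :: 'a::finite list set)"
  using finite_lists_length_eq[of "UNIV :: 'a set" n] by (simp add: seqs_def)

text \<open>
  The test \<open>0 < W x y\<close> is needed because \<open>log 2 0 = 0\<close>, so \<open>info_dens\<close> is junk where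
  \<open>W x y = 0\<close>.
\<close>

definition passes_threshold ::
  "nat \<Rightarrow> ('a list \<Rightarrow> real) \<Rightarrow> ('a list \<Rightarrow> 'b list \<Rightarrow> real) \<Rightarrow> real \<Rightarrow> real \<Rightarrow>
   'a list \<Rightarrow> 'b list \<Rightarrow> bool" where
  "passes_threshold n P W s lam x y \<longleftrightarrow> real n * lam \<le> info_dens n P W s x y \<and> 0 < W x y"

definition threshold_decoder ::
  "nat \<Rightarrow> ('a list \<Rightarrow> real) \<Rightarrow> ('a list \<Rightarrow> 'b list \<Rightarrow> real) \<Rightarrow> real \<Rightarrow> real \<Rightarrow> nat \<Rightarrow>
   (nat \<Rightarrow> 'a list) \<Rightarrow> 'b list \<Rightarrow> nat" where
  "threshold_decoder n P W s lam M c y =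
     threshold_ml_decoder M (\<lambda>j. W (c j) y) (\<lambda>j. passes_threshold n P W s lam (c j) y)"

lemma lam_tilde_le_if_passes_threshold:
  assumes P: "is_input_dist n P" and s: "0 < s" and pass: "passes_threshold n P W s lam x y"
  shows "lam_tilde n P W s lam y \<le> W x y"
proof -
  have W: "0 < W x y" using pass by (simp add: passes_threshold_def)
  have "0 \<le> avg_pow n P W s y"
    unfolding avg_pow_def using P by (intro sum_nonneg) (auto simp: is_input_dist_def)
  then consider "avg_pow n P W s y = 0" | "0 < avg_pow n P W s y" by linarith
  then show ?thesis
  proof cases
    case 1
    then show ?thesis using W by (simp add: lam_tilde_def)
  next
    case avg: 2
    have "real n * lam \<le> log 2 (W x y powr s / avg_pow n P W s y)"
      using pass by (simp add: passes_threshold_def info_dens_def)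
    then have "2 powr (real n * lam) * avg_pow n P W s y \<le> W x y powr s"
      using W avg by (simp add: le_log_iff le_divide_eq)
    then have "lam_tilde n P W s lam y \<le> (W x y powr s) powr (1 / s)"
      unfolding lam_tilde_def using avg s by (intro powr_mono2) auto
    also have "\<dots> = W x y" using s W by (simp add: powr_powr)
    finally show ?thesis .
  qed
qed

lemma random_coding_total_error_le:
  fixes W :: "'a::finite list \<Rightarrow> 'b list \<Rightarrow> real"
  assumes ch: "is_channel n W" and P: "is_input_dist n P" and M: "1 \<le> M"
    and m: "m \<in> {1..M}" and y: "y \<in> seqs n"
  shows "(\<Sum>c\<in>PiE {1..M} (\<lambda>_. seqs n). iid_weight P {1..M} c *
            (W (c m) y * (if threshold_decoder n P W s lam M c y \<in> {0..M} - {m} then 1 else 0)))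
     \<le> (\<Sum>x\<in>seqs n. P x * (W x y * (if info_dens n P W s x y < real n * lam then 1 else 0) +
           W x y * (if real n * lam \<le> info_dens n P W s x y then 1 else 0) *
           min 1 (real (M - 1) * (\<Sum>xb\<in>seqs n. P xb * (if W x y \<le> W xb y then 1 else 0)))))"
    (is "?lhs \<le> (\<Sum>x\<in>seqs n. P x * (?a x + ?b x * min 1 (real (M - 1) * (\<Sum>xb\<in>seqs n. P xb * ?Z x xb))))")
proof -
  have "?lhs \<le> (\<Sum>x\<in>(seqs n :: 'a list set). P x * (?a x + ?b x * min 1 (real (card {1..M} - 1) * (\<Sum>xb\<in>seqs n. P xb * ?Z x xb))))"
  proof (rule iid_random_coding_bound[where a = ?a and b = ?b and Z = ?Z])
    show "finite (seqs n :: 'a list set)" "finite {1..M}" "m \<in> {1..M}"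
      using m by (simp_all add: finite_seqs)
    show "sum P (seqs n) = 1" "\<And>x. x \<in> seqs n \<Longrightarrow> 0 \<le> P x"
      using P by (auto simp: is_input_dist_def)
    fix x :: "'a list" assume x: "x \<in> seqs n"
    have W: "0 \<le> W x y" using ch x y by (auto simp: is_channel_def)
    then show "0 \<le> ?b x" by simp
    fix c :: "nat \<Rightarrow> 'a list"
    let ?w = "\<lambda>j. W ((c(m := x)) j) y" and ?T = "real n * lam \<le> info_dens n P W s x y"
      and ?K = "min 1 (\<Sum>j\<in>{1..M} - {m}. ?Z x (c j))"
    define d where "d = threshold_decoder n P W s lam M (c(m := x)) y"
    have "d \<in> {0..M}"
      using threshold_ml_decoder_range[OF M] by (simp add: d_def threshold_decoder_def)
    then have error: "(if d \<in> {0..M} - {m} then 1 else 0) = (if d \<noteq> m then 1 else (0::real))"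
      by auto
    have count: "(\<Sum>j\<in>{1..M} - {m}. if ?w m \<le> ?w j then 1 else 0) = (\<Sum>j\<in>{1..M} - {m}. ?Z x (c j))"
      by (intro sum.cong) auto
    have "?w m * (if d \<noteq> m then 1 else 0)
        \<le> ?w m * ((if \<not> ?T then 1 else 0) + (if ?T then 1 else 0) *
                    min 1 (\<Sum>j\<in>{1..M} - {m}. if ?w m \<le> ?w j then 1 else 0))"
      unfolding d_def threshold_decoder_def
      using W by (intro threshold_ml_decoder_error_le[OF M m]) (auto simp: passes_threshold_def)
    also have "\<dots> = ?a x + ?b x * ?K"
      unfolding count by (simp add: not_le algebra_simps)
    finally show "W ((c(m := x)) m) y *
          (if threshold_decoder n P W s lam M (c(m := x)) y \<in> {0..M} - {m} then 1 else 0)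
        \<le> ?a x + ?b x * ?K"
      unfolding d_def[symmetric] error by simp
  qed
  then show ?thesis by simp
qed

lemma random_coding_undetected_error_le:
  fixes W :: "'a::finite list \<Rightarrow> 'b list \<Rightarrow> real"
  assumes ch: "is_channel n W" and P: "is_input_dist n P" and s: "0 < s" and M: "1 \<le> M"
    and m: "m \<in> {1..M}" and y: "y \<in> seqs n"
  shows "(\<Sum>c\<in>PiE {1..M} (\<lambda>_. seqs n). iid_weight P {1..M} c *
            (W (c m) y * (if threshold_decoder n P W s lam M c y \<in> {1..M} - {m} then 1 else 0)))
     \<le> (\<Sum>x\<in>seqs n. P x * (W x y * min 1 (real (M - 1) * psi_tilde n P W s lam y x)))"
proof -
  let ?t = "lam_tilde n P W s lam y"
  let ?Z = "\<lambda>x xb. if max (W x y) ?t \<le> W xb y then 1 else 0 :: real"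
  have "(\<Sum>c\<in>PiE {1..M} (\<lambda>_. seqs n). iid_weight P {1..M} c *
            (W (c m) y * (if threshold_decoder n P W s lam M c y \<in> {1..M} - {m} then 1 else 0)))
     \<le> (\<Sum>x\<in>(seqs n :: 'a list set). P x * (0 + W x y * min 1 (real (card {1..M} - 1) * (\<Sum>xb\<in>seqs n. P xb * ?Z x xb))))"
  proof (rule iid_random_coding_bound[where a = "\<lambda>_. 0" and b = "\<lambda>x. W x y" and Z = ?Z])
    show "finite (seqs n :: 'a list set)" "finite {1..M}" "m \<in> {1..M}"
      using m by (simp_all add: finite_seqs)
    show "sum P (seqs n) = 1" "\<And>x. x \<in> seqs n \<Longrightarrow> 0 \<le> P x"
      using P by (auto simp: is_input_dist_def)
    fix x :: "'a list" assume x: "x \<in> seqs n"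
    show W: "0 \<le> W x y" using ch x y by (auto simp: is_channel_def)
    fix c :: "nat \<Rightarrow> 'a list"
    let ?w = "\<lambda>j. W ((c(m := x)) j) y"
    have count: "(\<Sum>j\<in>{1..M} - {m}. if max (?w m) ?t \<le> ?w j then 1 else 0) = (\<Sum>j\<in>{1..M} - {m}. ?Z x (c j))"
      by (intro sum.cong) auto
    have "(if threshold_decoder n P W s lam M (c(m := x)) y \<in> {1..M} - {m} then 1 else 0)
        \<le> min 1 (\<Sum>j\<in>{1..M} - {m}. ?Z x (c j))"
      unfolding threshold_decoder_def count[symmetric]
      by (rule threshold_ml_decoder_undetected_le[OF M m lam_tilde_le_if_passes_threshold[OF P s]])
    from mult_left_mono[OF this W]
    show "W ((c(m := x)) m) y * (if threshold_decoder n P W s lam M (c(m := x)) y \<in> {1..M} - {m} then 1 else 0)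
        \<le> 0 + W x y * min 1 (\<Sum>j\<in>{1..M} - {m}. ?Z x (c j))"
      by simp
  qed
  then show ?thesis by (simp add: psi_tilde_def)
qed

text \<open>
  \<open>E m\<close> is the set of decoder outputs counted as an error when \<open>m\<close> is sent: \<open>{0..M} - {m}\<close>
  for the total and \<open>{1..M} - {m}\<close> for the undetected error probability.
\<close>

definition error_prob ::
  "nat \<Rightarrow> ('a list \<Rightarrow> 'b list \<Rightarrow> real) \<Rightarrow> nat \<Rightarrow> (nat \<Rightarrow> 'a list) \<Rightarrow> ('b list \<Rightarrow> nat) \<Rightarrow>
   (nat \<Rightarrow> nat set) \<Rightarrow> real" where
  "error_prob n W M c d E =
     (1 / real M) * (\<Sum>m\<in>{1..M}. \<Sum>y\<in>seqs n. W (c m) y * (if d y \<in> E m then 1 else 0))"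

lemma ensemble_error_prob_le:
  assumes M: "1 \<le> M"
    and bound: "\<And>m y. m \<in> {1..M} \<Longrightarrow> y \<in> seqs n \<Longrightarrow>
       (\<Sum>c\<in>S. q c * (W (c m) y * (if d c y \<in> E m then 1 else 0))) \<le> (\<Sum>x\<in>seqs n. G x y)"
  shows "(\<Sum>c\<in>S. q c * error_prob n W M c (d c) E) \<le> (\<Sum>x\<in>seqs n. \<Sum>y\<in>seqs n. G x y)"
proof -
  have "(\<Sum>c\<in>S. q c * error_prob n W M c (d c) E)
      = (1 / real M) * (\<Sum>c\<in>S. \<Sum>m\<in>{1..M}. \<Sum>y\<in>seqs n. q c * (W (c m) y * (if d c y \<in> E m then 1 else 0)))"
    unfolding error_prob_def sum_distrib_left by (simp only: mult.left_commute)
  also have "\<dots> = (1 / real M) * (\<Sum>m\<in>{1..M}. \<Sum>y\<in>seqs n. \<Sum>c\<in>S. q c * (W (c m) y * (if d c y \<in> E m then 1 else 0)))"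
    by (subst sum.swap) (subst (2) sum.swap, rule refl)
  also have "\<dots> \<le> (1 / real M) * (\<Sum>m\<in>{1..M}. \<Sum>y\<in>seqs n. \<Sum>x\<in>seqs n. G x y)"
    using bound by (intro mult_left_mono sum_mono) auto
  also have "\<dots> = (\<Sum>y\<in>seqs n. \<Sum>x\<in>seqs n. G x y)"
    using M by simp
  also have "\<dots> = (\<Sum>x\<in>seqs n. \<Sum>y\<in>seqs n. G x y)"
    by (rule sum.swap)
  finally show ?thesis .
qed

lemma ensemble_total_error_le:
  fixes W :: "'a::finite list \<Rightarrow> 'b::finite list \<Rightarrow> real"
  assumes ch: "is_channel n W" and P: "is_input_dist n P"
  shows "(\<Sum>c\<in>PiE {1..2^k} (\<lambda>_. seqs n). iid_weight P {1..2^k} c *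
            error_prob n W (2^k) c (threshold_decoder n P W s lam (2^k) c) (\<lambda>m. {0..2^k} - {m}))
     \<le> RCU_tilde n k P W s lam +
         (\<Sum>x\<in>seqs n. \<Sum>y\<in>seqs n. P x * W x y * (if info_dens n P W s x y < real n * lam then 1 else 0))"
proof -
  let ?M = "2 ^ k :: nat"
  have "(\<Sum>c\<in>PiE {1..?M} (\<lambda>_. seqs n). iid_weight P {1..?M} c *
            error_prob n W ?M c (threshold_decoder n P W s lam ?M c) (\<lambda>m. {0..?M} - {m}))
     \<le> (\<Sum>x\<in>seqs n. \<Sum>y\<in>seqs n. P x * (W x y * (if info_dens n P W s x y < real n * lam then 1 else 0) +
           W x y * (if real n * lam \<le> info_dens n P W s x y then 1 else 0) *
           min 1 (real (?M - 1) * (\<Sum>xb\<in>seqs n. P xb * (if W x y \<le> W xb y then 1 else 0)))))"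
    by (intro ensemble_error_prob_le random_coding_total_error_le[OF ch P]) simp_all
  also have "\<dots> = RCU_tilde n k P W s lam +
         (\<Sum>x\<in>seqs n. \<Sum>y\<in>seqs n. P x * W x y * (if info_dens n P W s x y < real n * lam then 1 else 0))"
    unfolding RCU_tilde_def by (simp add: algebra_simps flip: sum.distrib)
  finally show ?thesis .
qed

lemma ensemble_undetected_error_le:
  fixes W :: "'a::finite list \<Rightarrow> 'b::finite list \<Rightarrow> real"
  assumes ch: "is_channel n W" and P: "is_input_dist n P" and s: "0 < s"
  shows "(\<Sum>c\<in>PiE {1..2^k} (\<lambda>_. seqs n). iid_weight P {1..2^k} c *
            error_prob n W (2^k) c (threshold_decoder n P W s lam (2^k) c) (\<lambda>m. {1..2^k} - {m}))
     \<le> (\<Sum>x\<in>seqs n. \<Sum>y\<in>seqs n. P x * W x y * min 1 ((2^k - 1) * psi_tilde n P W s lam y x))"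
proof -
  let ?M = "2 ^ k :: nat"
  have "(\<Sum>c\<in>PiE {1..?M} (\<lambda>_. seqs n). iid_weight P {1..?M} c *
            error_prob n W ?M c (threshold_decoder n P W s lam ?M c) (\<lambda>m. {1..?M} - {m}))
     \<le> (\<Sum>x\<in>seqs n. \<Sum>y\<in>seqs n. P x * (W x y * min 1 (real (?M - 1) * psi_tilde n P W s lam y x)))"
    by (intro ensemble_error_prob_le random_coding_undetected_error_le[OF ch P s]) simp_all
  then show ?thesis by (simp add: mult.assoc)
qed

section \<open>Codes with two-valued common randomness\<close>

lemma sum_decoding_regions:
  fixes f :: "'y \<Rightarrow> real"
  assumes Y: "finite Y" and B: "finite B"
  shows "(\<Sum>b\<in>B. \<Sum>y\<in>{y\<in>Y. d y = b}. f y) = (\<Sum>y\<in>Y. f y * (if d y \<in> B then 1 else 0))"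
proof -
  have "(\<Sum>b\<in>B. \<Sum>y\<in>{y\<in>Y. d y = b}. f y) = (\<Sum>b\<in>B. \<Sum>y\<in>{y. y \<in> {y\<in>Y. d y \<in> B} \<and> d y = b}. f y)"
    by (intro sum.cong) auto
  also have "\<dots> = (\<Sum>y\<in>{y\<in>Y. d y \<in> B}. f y)"
    using Y B by (intro sum.group) auto
  also have "\<dots> = (\<Sum>y\<in>Y. f y * (if d y \<in> B then 1 else 0))"
    using Y by (simp add: sum.inter_filter if_distrib cong: if_cong)
  finally show ?thesis .
qed

lemma code_error_sum:
  fixes Pu :: "'u::finite \<Rightarrow> real" and W :: "'a list \<Rightarrow> 'b::finite list \<Rightarrow> real"
  assumes E: "\<And>m. finite (E m)"
  shows "(1 / 2^k) * (\<Sum>m\<in>{1..2^k}. \<Sum>m'\<in>E m. \<Sum>u\<in>UNIV. Pu u * (\<Sum>y\<in>{y\<in>seqs n. dec u y = m'}. W (enc u m) y))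
       = (\<Sum>u\<in>UNIV. Pu u * error_prob n W (2^k) (enc u) (dec u) E)"
proof -
  define R where "R u m = (\<Sum>y\<in>seqs n. W (enc u m) y * (if dec u y \<in> E m then 1 else 0))" for u m
  have "(\<Sum>m'\<in>E m. \<Sum>u\<in>UNIV. Pu u * (\<Sum>y\<in>{y\<in>seqs n. dec u y = m'}. W (enc u m) y))
      = (\<Sum>u\<in>UNIV. Pu u * R u m)" for m
    unfolding R_def
    by (subst sum.swap) (simp add: sum_decoding_regions[OF finite_seqs E] flip: sum_distrib_left)
  then have "(1 / 2^k) * (\<Sum>m\<in>{1..2^k}. \<Sum>m'\<in>E m. \<Sum>u\<in>UNIV. Pu u * (\<Sum>y\<in>{y\<in>seqs n. dec u y = m'}. W (enc u m) y))
      = (1 / 2^k) * (\<Sum>u\<in>UNIV. Pu u * (\<Sum>m\<in>{1..2^k}. R u m))"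
    by (simp add: sum_distrib_left) (rule sum.swap)
  also have "\<dots> = (\<Sum>u\<in>UNIV. Pu u * error_prob n W (2^k) (enc u) (dec u) E)"
    unfolding error_prob_def R_def by (simp add: sum_distrib_left mult_ac)
  finally show ?thesis .
qed

lemma is_code_time_sharing:
  fixes W :: "'a list \<Rightarrow> 'b::finite list \<Rightarrow> real"
  assumes c: "c1 \<in> PiE {1..2^k} (\<lambda>_. seqs n)" "c2 \<in> PiE {1..2^k} (\<lambda>_. seqs n)"
    and d: "\<And>y. d1 y \<in> {0..2^k}" "\<And>y. d2 y \<in> {0..2^k}" and \<theta>: "0 \<le> \<theta>" "\<theta> \<le> 1"
  shows "is_code n k
     (\<theta> * error_prob n W (2^k) c1 d1 (\<lambda>m. {0..2^k} - {m}) + (1 - \<theta>) * error_prob n W (2^k) c2 d2 (\<lambda>m. {0..2^k} - {m}))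
     (\<theta> * error_prob n W (2^k) c1 d1 (\<lambda>m. {1..2^k} - {m}) + (1 - \<theta>) * error_prob n W (2^k) c2 d2 (\<lambda>m. {1..2^k} - {m}))
     W (\<lambda>u. if u then \<theta> else 1 - \<theta>) (\<lambda>u. if u then c1 else c2) (\<lambda>u. if u then d1 else d2)"
  unfolding is_code_def
  by (subst (1 2) code_error_sum) (use c d \<theta> in \<open>auto simp: UNIV_bool PiE_def Pi_def\<close>)

theorem theorem2:
  fixes W :: "('a::finite) list \<Rightarrow> ('b::finite) list \<Rightarrow> real"
    and P :: "'a list \<Rightarrow> real"
    and n k :: nat and s lam :: real
  assumes "n \<ge> 1"
    and "is_channel n W"
    and "is_input_dist n P"
    and "s > 0"
  shows "\<exists>eT eU Pu enc dec. is_code n k eT eU W Pu enc dec \<and>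
     eT \<le> RCU_tilde n k P W s lam +
           (\<Sum>x\<in>seqs n. \<Sum>y\<in>seqs n. P x * W x y *
              (if info_dens n P W s x y < real n * lam then 1 else 0)) \<and>
     eU \<le> (\<Sum>x\<in>seqs n. \<Sum>y\<in>seqs n. P x * W x y *
              min 1 ((2^k - 1) * psi_tilde n P W s lam y x))"
proof -
  let ?M = "2 ^ k :: nat"
  let ?d = "threshold_decoder n P W s lam ?M"
  let ?eT = "\<lambda>c. error_prob n W ?M c (?d c) (\<lambda>m. {0..?M} - {m})"
  let ?eU = "\<lambda>c. error_prob n W ?M c (?d c) (\<lambda>m. {1..?M} - {m})"
  let ?S = "PiE {1..?M} (\<lambda>_. seqs n) :: (nat \<Rightarrow> 'a list) set" and ?q = "iid_weight P {1..?M}"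
  have P: "sum P (seqs n) = 1" "\<And>x. x \<in> seqs n \<Longrightarrow> 0 \<le> P x"
    using assms(3) by (auto simp: is_input_dist_def)
  have S: "finite ?S" by (simp add: finite_PiE finite_seqs)
  have q: "\<And>c. c \<in> ?S \<Longrightarrow> 0 \<le> ?q c" "sum ?q ?S = 1"
    using iid_weight_nonneg[OF P(2)] sum_iid_weight[OF finite_seqs finite_atLeastAtMost P(1)] by simp_all
  obtain c1 c2 \<theta> where c: "c1 \<in> ?S" "c2 \<in> ?S" and \<theta>: "0 \<le> \<theta>" "\<theta> \<le> 1"
    and bounds: "\<theta> * ?eT c1 + (1 - \<theta>) * ?eT c2 \<le> RCU_tilde n k P W s lam +
           (\<Sum>x\<in>seqs n. \<Sum>y\<in>seqs n. P x * W x y * (if info_dens n P W s x y < real n * lam then 1 else 0))"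
      "\<theta> * ?eU c1 + (1 - \<theta>) * ?eU c2 \<le>
           (\<Sum>x\<in>seqs n. \<Sum>y\<in>seqs n. P x * W x y * min 1 ((2^k - 1) * psi_tilde n P W s lam y x))"
    using two_point_mixture_le[OF S q ensemble_total_error_le[OF assms(2,3)]
        ensemble_undetected_error_le[OF assms(2-4)]] by blast
  have "?d c y \<in> {0..?M}" for c y
    unfolding threshold_decoder_def by (rule threshold_ml_decoder_range) simp
  with is_code_time_sharing[OF c _ _ \<theta>] bounds show ?thesis by blast
qed

end
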